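(* Let $1\le p<\infty$, $1\le q<\infty$ and $\theta>0$. Then the grand amalgam Lebesgue function space $l^{q),\theta}(L^p)$, equipped with $\|\cdot\|_{p,q),\theta}$, is a normed space (functions equal almost everywhere being identified).
   Context: Let $X$ denote one of $\mathbb N$, $\mathbb N_0$ or $\mathbb Z$, and for $k\in X$ let $I_k=[k,k+1)$. For $1\le p,q<\infty$ and $\theta>0$, the grand amalgam Lebesgue function space $l^{q),\theta}(L^p)$ is the set of all complex-valued measurable functions $g$ defined on $\bigcup_{k\in X}I_k$ with $g\chi_{I_k}\in L^p$ for each $k\in X$ and $$\|g\|_{p,q),\theta}:=\sup_{\varepsilon>0}\Big(\varepsilon^{\theta}\sum_{k\in X}\Big(\int_k^{k+1}|g(x)|^p\,dx\Big)^{\frac{q(1+\varepsilon)}{p}}\Big)^{\frac{1}{q(1+\varepsilon)}}<\infty .$$ Equivalently $\|g\|_{p,q),\theta}=\sup_{\varepsilon>0}\varepsilon^{\frac{\theta}{q(1+\varepsilon)}}\big\|\{\|g\chi_{I_k}\|_{L^p}\}_{k\in X}\big\|_{l^{q(1+\varepsilon)}}$. *)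

theory Defs
  imports "HOL-Analysis.Analysis"
begin

definition admissible_index_set :: "int set \<Rightarrow> bool" where
  "admissible_index_set X \<longleftrightarrow> X = {k. k \<ge> 1} \<or> X = {k. k \<ge> 0} \<or> X = UNIV"

definition Ik :: "int \<Rightarrow> real set" where
  "Ik k = {real_of_int k ..< real_of_int k + 1}"

definition dom_X :: "int set \<Rightarrow> real set" where
  "dom_X X = (\<Union>k\<in>X. Ik k)"

definition loc_int :: "real \<Rightarrow> (real \<Rightarrow> complex) \<Rightarrow> int \<Rightarrow> real" where
  "loc_int p g k = (LINT x:Ik k|lebesgue. norm (g x) powr p)"

definition gal_term :: "int set \<Rightarrow> real \<Rightarrow> real \<Rightarrow> real \<Rightarrow> (real \<Rightarrow> complex) \<Rightarrow> real \<Rightarrow> real" where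
  "gal_term X p q \<theta> g \<epsilon> =
     (\<epsilon> powr \<theta> * (\<Sum>\<^sub>\<infinity>k\<in>X. loc_int p g k powr (q * (1 + \<epsilon>) / p))) powr (1 / (q * (1 + \<epsilon>)))"

text \<open>The grand amalgam space l^{q),theta}(L^p) (as a set of functions; a.e.-equal functions
  are identified by the norm). Finiteness of the supremum is expressed as: all the series
  converge and the resulting values are bounded.\<close>
definition grand_amalgam :: "int set \<Rightarrow> real \<Rightarrow> real \<Rightarrow> real \<Rightarrow> (real \<Rightarrow> complex) set" where
  "grand_amalgam X p q \<theta> = {g.
     set_borel_measurable lebesgue (dom_X X) g \<and>
     (\<forall>k\<in>X. set_integrable lebesgue (Ik k) (\<lambda>x. norm (g x) powr p)) \<and>
     (\<forall>\<epsilon>>0. (\<lambda>k. loc_int p g k powr (q * (1 + \<epsilon>) / p)) summable_on X) \<and>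
     bdd_above (gal_term X p q \<theta> g ` {0<..})}"

definition gal_norm :: "int set \<Rightarrow> real \<Rightarrow> real \<Rightarrow> real \<Rightarrow> (real \<Rightarrow> complex) \<Rightarrow> real" where
  "gal_norm X p q \<theta> g = (SUP \<epsilon>\<in>{0<..}. gal_term X p q \<theta> g \<epsilon>)"

end

theory Submission
  imports Defs
begin

text \<open>
  For each \<open>\<epsilon> > 0\<close> the quantity under the supremum is \<open>\<epsilon> powr (\<theta> / r)\<close> times the
  \<open>l\<^sup>r\<close> norm, \<open>r = q (1 + \<epsilon>) \<ge> 1\<close>, of the sequence of local \<open>L\<^sup>p\<close> norms of \<open>g\<close> on the
  intervals \<open>I\<^sub>k\<close>. Minkowski's inequality, first in \<open>L\<^sup>p(I\<^sub>k)\<close> and then in \<open>l\<^sup>r\<close>, makes it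
  subadditive in \<open>g\<close>, and a supremum of subadditive, absolutely homogeneous functionals is
  again a seminorm; it vanishes exactly when every local norm does. Both Minkowski inequalities
  come from the single convexity estimate
  \<open>(a + b) powr p \<le> a powr p / t powr (p - 1) + b powr p / (1 - t) powr (p - 1)\<close>, \<open>0 < t < 1\<close>,
  optimised over \<open>t\<close>.
\<close>

lemma convex_on_powr_nonneg:
  assumes "p \<ge> 1"
  shows "convex_on {0::real..} (\<lambda>x. x powr p)"
proof
  fix t x y :: real
  assume t: "0 < t" "t < 1" and x: "x \<in> {0..}" and y: "y \<in> {0..}" and "x < y"
  show "((1 - t) *\<^sub>R x + t *\<^sub>R y) powr p \<le> (1 - t) * x powr p + t * y powr p"
  proof (cases "x = 0")
    case True
    have "t powr p \<le> t powr 1"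
      using t assms by (intro powr_mono') auto
    then have "t powr p * y powr p \<le> t * y powr p"
      using t by (intro mult_right_mono) auto
    then show ?thesis
      using True t y by (simp add: powr_mult)
  next
    case False
    then show ?thesis
      using x y t \<open>x < y\<close> convex_onD[OF powr_convex[OF assms], of t x y] by auto
  qed
qed (rule convex_real_interval)

lemma powr_add_le_split:
  fixes a b t p :: real
  assumes "0 \<le> a" "0 \<le> b" "0 < t" "t < 1" "1 \<le> p"
  shows "(a + b) powr p \<le> a powr p / t powr (p - 1) + b powr p / (1 - t) powr (p - 1)"
proof -
  have rescale: "s * (c / s) powr p = c powr p / s powr (p - 1)" if "0 < s" "0 \<le> c" for s c :: real
    using that by (simp add: powr_divide powr_diff)
  have "a + b = (1 - t) *\<^sub>R (b / (1 - t)) + t *\<^sub>R (a / t)"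
    using assms by simp
  then have "(a + b) powr p \<le> (1 - t) * (b / (1 - t)) powr p + t * (a / t) powr p"
    using convex_onD[OF convex_on_powr_nonneg[OF assms(5)], of t "b / (1 - t)" "a / t"] assms
    by (simp add: add.commute)
  also have "\<dots> = a powr p / t powr (p - 1) + b powr p / (1 - t) powr (p - 1)"
    using assms by (simp add: rescale)
  finally show ?thesis .
qed

lemma powr_add_le_two_powr:
  fixes a b p :: real
  assumes "0 \<le> a" "0 \<le> b" "1 \<le> p"
  shows "(a + b) powr p \<le> 2 powr (p - 1) * (a powr p + b powr p)"
  using powr_add_le_split[OF assms(1,2) _ _ assms(3), of "1 / 2"]
  by (simp add: powr_divide algebra_simps)

text \<open>The bound is used at \<open>t = \<alpha> / (\<alpha> + \<beta>)\<close> with \<open>\<alpha>\<close>, \<open>\<beta>\<close> slightly above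
  \<open>a powr (1 / p)\<close>, \<open>b powr (1 / p)\<close>, where its right-hand side is at most \<open>(\<alpha> + \<beta>) powr p\<close>.\<close>

lemma root_le_add_root_of_split_bound:
  fixes a b c p :: real
  assumes p: "1 \<le> p" and nonneg: "0 \<le> a" "0 \<le> b" "0 \<le> c"
    and split: "\<And>t. 0 < t \<Longrightarrow> t < 1 \<Longrightarrow> c \<le> a / t powr (p - 1) + b / (1 - t) powr (p - 1)"
  shows "c powr (1 / p) \<le> a powr (1 / p) + b powr (1 / p)"
proof (rule field_le_epsilon)
  fix e :: real
  assume "0 < e"
  define \<alpha> where "\<alpha> = a powr (1 / p) + e / 2"
  define \<beta> where "\<beta> = b powr (1 / p) + e / 2"
  have pos: "0 < \<alpha>" "0 < \<beta>"
    using \<open>0 < e\<close> by (auto simp: \<alpha>_def \<beta>_def intro: add_nonneg_pos)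
  have weighted: "x / (y / (\<alpha> + \<beta>)) powr (p - 1) \<le> y * (\<alpha> + \<beta>) powr (p - 1)"
    if "0 \<le> x" "x powr (1 / p) \<le> y" "0 < y" for x y
  proof -
    have "x = (x powr (1 / p)) powr p"
      using that p by (simp add: powr_powr)
    also have "\<dots> \<le> y powr p"
      using that p by (intro powr_mono2) auto
    finally have "x / (y / (\<alpha> + \<beta>)) powr (p - 1) \<le> y powr p / (y / (\<alpha> + \<beta>)) powr (p - 1)"
      by (simp add: divide_right_mono)
    also have "\<dots> = y * (\<alpha> + \<beta>) powr (p - 1)"
      using that pos by (simp add: powr_divide powr_diff)
    finally show ?thesis .
  qed
  have "c \<le> a / (\<alpha> / (\<alpha> + \<beta>)) powr (p - 1) + b / (1 - \<alpha> / (\<alpha> + \<beta>)) powr (p - 1)"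
    using pos by (intro split) auto
  also have "1 - \<alpha> / (\<alpha> + \<beta>) = \<beta> / (\<alpha> + \<beta>)"
    using pos by (simp add: field_simps)
  also have "a / (\<alpha> / (\<alpha> + \<beta>)) powr (p - 1) + b / (\<beta> / (\<alpha> + \<beta>)) powr (p - 1)
      \<le> \<alpha> * (\<alpha> + \<beta>) powr (p - 1) + \<beta> * (\<alpha> + \<beta>) powr (p - 1)"
    using nonneg pos \<open>0 < e\<close> by (intro add_mono weighted) (auto simp: \<alpha>_def \<beta>_def)
  also have "\<dots> = (\<alpha> + \<beta>) powr p"
    using pos by (simp add: powr_diff add_divide_distrib[symmetric] flip: distrib_right)
  finally have "c powr (1 / p) \<le> ((\<alpha> + \<beta>) powr p) powr (1 / p)"
    using nonneg p by (intro powr_mono2) auto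
  also have "\<dots> = \<alpha> + \<beta>"
    using pos p by (simp add: powr_powr)
  finally show "c powr (1 / p) \<le> a powr (1 / p) + b powr (1 / p) + e"
    by (simp add: \<alpha>_def \<beta>_def)
qed

lemma integrable_norm_add_powr:
  fixes f g :: "'a \<Rightarrow> 'b::{real_normed_vector, second_countable_topology}"
  assumes p: "1 \<le> p"
    and [measurable]: "f \<in> borel_measurable M" "g \<in> borel_measurable M"
    and "integrable M (\<lambda>x. norm (f x) powr p)" "integrable M (\<lambda>x. norm (g x) powr p)"
  shows "integrable M (\<lambda>x. norm (f x + g x) powr p)"
proof (rule Bochner_Integration.integrable_bound)
  show "integrable M (\<lambda>x. 2 powr (p - 1) * (norm (f x) powr p + norm (g x) powr p))"
    using assms by auto
  show "AE x in M. norm (norm (f x + g x) powr p)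
      \<le> norm (2 powr (p - 1) * (norm (f x) powr p + norm (g x) powr p))"
  proof (intro AE_I2)
    fix x
    have "norm (f x + g x) powr p \<le> (norm (f x) + norm (g x)) powr p"
      using p by (intro powr_mono2 norm_triangle_ineq) auto
    also have "\<dots> \<le> 2 powr (p - 1) * (norm (f x) powr p + norm (g x) powr p)"
      using p by (intro powr_add_le_two_powr) auto
    finally show "norm (norm (f x + g x) powr p)
        \<le> norm (2 powr (p - 1) * (norm (f x) powr p + norm (g x) powr p))"
      by simp
  qed
qed measurable

lemma Minkowski_integral:
  fixes f g :: "'a \<Rightarrow> 'b::{real_normed_vector, second_countable_topology}"
  assumes p: "1 \<le> p"
    and meas: "f \<in> borel_measurable M" "g \<in> borel_measurable M"
    and int: "integrable M (\<lambda>x. norm (f x) powr p)" "integrable M (\<lambda>x. norm (g x) powr p)"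
  shows "(\<integral>x. norm (f x + g x) powr p \<partial>M) powr (1 / p)
    \<le> (\<integral>x. norm (f x) powr p \<partial>M) powr (1 / p) + (\<integral>x. norm (g x) powr p \<partial>M) powr (1 / p)"
proof (rule root_le_add_root_of_split_bound[OF p])
  fix t :: real
  assume t: "0 < t" "t < 1"
  have "(\<integral>x. norm (f x + g x) powr p \<partial>M)
      \<le> (\<integral>x. norm (f x) powr p / t powr (p - 1) + norm (g x) powr p / (1 - t) powr (p - 1) \<partial>M)"
  proof (rule integral_mono)
    fix x
    have "norm (f x + g x) powr p \<le> (norm (f x) + norm (g x)) powr p"
      using p by (intro powr_mono2 norm_triangle_ineq) auto
    also have "\<dots> \<le> norm (f x) powr p / t powr (p - 1) + norm (g x) powr p / (1 - t) powr (p - 1)"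
      using p t by (intro powr_add_le_split) auto
    finally show "norm (f x + g x) powr p
        \<le> norm (f x) powr p / t powr (p - 1) + norm (g x) powr p / (1 - t) powr (p - 1)" .
  qed (use integrable_norm_add_powr[OF p meas int] int in auto)
  also have "\<dots> = (\<integral>x. norm (f x) powr p \<partial>M) / t powr (p - 1)
      + (\<integral>x. norm (g x) powr p \<partial>M) / (1 - t) powr (p - 1)"
    using int by simp
  finally show "(\<integral>x. norm (f x + g x) powr p \<partial>M)
      \<le> (\<integral>x. norm (f x) powr p \<partial>M) / t powr (p - 1)
        + (\<integral>x. norm (g x) powr p \<partial>M) / (1 - t) powr (p - 1)" .
qed auto

lemma summable_on_powr_of_le_add:
  fixes a b c :: "'i \<Rightarrow> real"
  assumes p: "1 \<le> p"
    and nonneg: "\<And>i. i \<in> I \<Longrightarrow> 0 \<le> a i" "\<And>i. i \<in> I \<Longrightarrow> 0 \<le> b i" "\<And>i. i \<in> I \<Longrightarrow> 0 \<le> c i"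
    and le: "\<And>i. i \<in> I \<Longrightarrow> c i \<le> a i + b i"
    and "(\<lambda>i. a i powr p) summable_on I" "(\<lambda>i. b i powr p) summable_on I"
  shows "(\<lambda>i. c i powr p) summable_on I"
proof (rule summable_on_comparison_test)
  show "(\<lambda>i. 2 powr (p - 1) * (a i powr p + b i powr p)) summable_on I"
    using assms by (intro summable_on_cmult_right summable_on_add)
  fix i
  assume i: "i \<in> I"
  have "c i powr p \<le> (a i + b i) powr p"
    using p i nonneg le by (intro powr_mono2) auto
  also have "\<dots> \<le> 2 powr (p - 1) * (a i powr p + b i powr p)"
    using p i nonneg by (intro powr_add_le_two_powr) auto
  finally show "c i powr p \<le> 2 powr (p - 1) * (a i powr p + b i powr p)" .
qed simp

lemma Minkowski_infsum:
  fixes a b c :: "'i \<Rightarrow> real"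
  assumes p: "1 \<le> p"
    and nonneg: "\<And>i. i \<in> I \<Longrightarrow> 0 \<le> a i" "\<And>i. i \<in> I \<Longrightarrow> 0 \<le> b i" "\<And>i. i \<in> I \<Longrightarrow> 0 \<le> c i"
    and le: "\<And>i. i \<in> I \<Longrightarrow> c i \<le> a i + b i"
    and sum: "(\<lambda>i. a i powr p) summable_on I" "(\<lambda>i. b i powr p) summable_on I"
  shows "(\<Sum>\<^sub>\<infinity>i\<in>I. c i powr p) powr (1 / p)
    \<le> (\<Sum>\<^sub>\<infinity>i\<in>I. a i powr p) powr (1 / p) + (\<Sum>\<^sub>\<infinity>i\<in>I. b i powr p) powr (1 / p)"
proof (rule root_le_add_root_of_split_bound[OF p])
  fix t :: real
  assume t: "0 < t" "t < 1"
  have "((\<lambda>i. c i powr p) has_sum (\<Sum>\<^sub>\<infinity>i\<in>I. c i powr p)) I"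
    using summable_on_powr_of_le_add[OF assms] by (simp add: has_sum_infsum)
  moreover have "((\<lambda>i. a i powr p / t powr (p - 1) + b i powr p / (1 - t) powr (p - 1)) has_sum
      ((\<Sum>\<^sub>\<infinity>i\<in>I. a i powr p) / t powr (p - 1)
        + (\<Sum>\<^sub>\<infinity>i\<in>I. b i powr p) / (1 - t) powr (p - 1))) I"
    using sum by (intro has_sum_add has_sum_divide_const) (auto simp: has_sum_infsum)
  ultimately show "(\<Sum>\<^sub>\<infinity>i\<in>I. c i powr p)
      \<le> (\<Sum>\<^sub>\<infinity>i\<in>I. a i powr p) / t powr (p - 1)
        + (\<Sum>\<^sub>\<infinity>i\<in>I. b i powr p) / (1 - t) powr (p - 1)"
  proof (rule has_sum_mono)
    fix i
    assume i: "i \<in> I"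
    have "c i powr p \<le> (a i + b i) powr p"
      using p i nonneg le by (intro powr_mono2) auto
    also have "\<dots> \<le> a i powr p / t powr (p - 1) + b i powr p / (1 - t) powr (p - 1)"
      using p t i nonneg by (intro powr_add_le_split) auto
    finally show "c i powr p \<le> a i powr p / t powr (p - 1) + b i powr p / (1 - t) powr (p - 1)" .
  qed
qed (auto intro!: infsum_nonneg)

lemma
  fixes f g :: "'a \<Rightarrow> 'b::{real_normed_vector, second_countable_topology}"
  assumes p: "1 \<le> p" and A: "A \<in> sets M"
    and meas: "set_borel_measurable M A f" "set_borel_measurable M A g"
    and int: "set_integrable M A (\<lambda>x. norm (f x) powr p)" "set_integrable M A (\<lambda>x. norm (g x) powr p)"
  shows set_integrable_norm_add_powr: "set_integrable M A (\<lambda>x. norm (f x + g x) powr p)"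
    and Minkowski_set_integral: "(LINT x:A|M. norm (f x + g x) powr p) powr (1 / p)
      \<le> (LINT x:A|M. norm (f x) powr p) powr (1 / p) + (LINT x:A|M. norm (g x) powr p) powr (1 / p)"
proof -
  have A': "A \<inter> space M \<in> sets M"
    using A by simp
  have set_integral: "(LINT x:A|M. h x) = (\<integral>x. h x \<partial>restrict_space M A)" for h :: "'a \<Rightarrow> real"
    by (simp add: set_lebesgue_integral_def integral_restrict_space[OF A'])
  have meas': "f \<in> borel_measurable (restrict_space M A)" "g \<in> borel_measurable (restrict_space M A)"
    using meas by (simp_all add: set_borel_measurable_def borel_measurable_restrict_space_iff[OF A'])
  have int': "integrable (restrict_space M A) (\<lambda>x. norm (f x) powr p)"
      "integrable (restrict_space M A) (\<lambda>x. norm (g x) powr p)"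
    using int by (simp_all add: set_integrable_eq[OF A'])
  show "set_integrable M A (\<lambda>x. norm (f x + g x) powr p)"
    using integrable_norm_add_powr[OF p meas' int'] by (simp add: set_integrable_eq[OF A'])
  show "(LINT x:A|M. norm (f x + g x) powr p) powr (1 / p)
      \<le> (LINT x:A|M. norm (f x) powr p) powr (1 / p) + (LINT x:A|M. norm (g x) powr p) powr (1 / p)"
    unfolding set_integral by (rule Minkowski_integral[OF p meas' int'])
qed

lemma set_integral_nonneg_eq_0_iff_AE:
  fixes h :: "'a \<Rightarrow> real"
  assumes "set_integrable M A h" "\<And>x. 0 \<le> h x"
  shows "(LINT x:A|M. h x) = 0 \<longleftrightarrow> (AE x in M. x \<in> A \<longrightarrow> h x = 0)"
  using integral_nonneg_eq_0_iff_AE[of M "\<lambda>x. indicator A x *\<^sub>R h x"] assms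
  by (simp add: set_lebesgue_integral_def set_integrable_def indicator_eq_0_iff)

lemma Ik_sets [measurable]: "Ik k \<in> sets lebesgue"
  by (simp add: Ik_def)

lemma Ik_subset_dom_X: "k \<in> X \<Longrightarrow> Ik k \<subseteq> dom_X X"
  by (auto simp: dom_X_def)

definition loc_norm :: "real \<Rightarrow> (real \<Rightarrow> complex) \<Rightarrow> int \<Rightarrow> real" where
  "loc_norm p g k = loc_int p g k powr (1 / p)"

lemma loc_int_nonneg: "0 \<le> loc_int p g k"
  unfolding loc_int_def set_lebesgue_integral_def by (intro integral_nonneg_AE) auto

lemma loc_norm_nonneg: "0 \<le> loc_norm p g k"
  by (simp add: loc_norm_def)

lemma loc_int_powr_eq_loc_norm_powr: "loc_int p g k powr (r / p) = loc_norm p g k powr r"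
  by (simp add: loc_norm_def powr_powr)

lemma loc_norm_eq_0_iff:
  assumes "set_integrable lebesgue (Ik k) (\<lambda>x. norm (g x) powr p)"
  shows "loc_norm p g k = 0 \<longleftrightarrow> (AE x in lebesgue. x \<in> Ik k \<longrightarrow> g x = 0)"
  using set_integral_nonneg_eq_0_iff_AE[OF assms] by (simp add: loc_norm_def loc_int_def)

lemma loc_norm_mult:
  assumes "0 < p"
  shows "loc_norm p (\<lambda>x. c * g x) k = norm c * loc_norm p g k"
proof -
  have "loc_int p (\<lambda>x. c * g x) k = norm c powr p * loc_int p g k"
    by (simp add: loc_int_def norm_mult powr_mult)
  then show ?thesis
    using assms by (simp add: loc_norm_def powr_mult loc_int_nonneg powr_powr)
qed

lemma loc_norm_add_le:
  assumes "1 \<le> p"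
    and "set_borel_measurable lebesgue (Ik k) f" "set_borel_measurable lebesgue (Ik k) g"
    and "set_integrable lebesgue (Ik k) (\<lambda>x. norm (f x) powr p)"
      "set_integrable lebesgue (Ik k) (\<lambda>x. norm (g x) powr p)"
  shows "loc_norm p (\<lambda>x. f x + g x) k \<le> loc_norm p f k + loc_norm p g k"
  using Minkowski_set_integral[OF assms(1) Ik_sets assms(2-)] by (simp add: loc_norm_def loc_int_def)

lemma gal_term_nonneg: "0 \<le> gal_term X p q \<theta> g \<epsilon>"
  by (simp add: gal_term_def)

lemma gal_term_eq_loc_norm:
  "gal_term X p q \<theta> g \<epsilon> = (\<epsilon> powr \<theta>) powr (1 / (q * (1 + \<epsilon>)))
    * (\<Sum>\<^sub>\<infinity>k\<in>X. loc_norm p g k powr (q * (1 + \<epsilon>))) powr (1 / (q * (1 + \<epsilon>)))"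
  unfolding gal_term_def loc_int_powr_eq_loc_norm_powr
  by (simp add: powr_mult infsum_nonneg)

lemma grand_amalgamI:
  assumes "set_borel_measurable lebesgue (dom_X X) g"
    and "\<And>k. k \<in> X \<Longrightarrow> set_integrable lebesgue (Ik k) (\<lambda>x. norm (g x) powr p)"
    and "\<And>\<epsilon>. 0 < \<epsilon> \<Longrightarrow> (\<lambda>k. loc_norm p g k powr (q * (1 + \<epsilon>))) summable_on X"
    and "\<And>\<epsilon>. 0 < \<epsilon> \<Longrightarrow> gal_term X p q \<theta> g \<epsilon> \<le> B"
  shows "g \<in> grand_amalgam X p q \<theta>"
  using assms by (auto simp: grand_amalgam_def loc_int_powr_eq_loc_norm_powr bdd_above_def)

lemma grand_amalgamD:
  assumes "g \<in> grand_amalgam X p q \<theta>"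
  shows "set_borel_measurable lebesgue (dom_X X) g"
    and "k \<in> X \<Longrightarrow> set_borel_measurable lebesgue (Ik k) g"
    and "k \<in> X \<Longrightarrow> set_integrable lebesgue (Ik k) (\<lambda>x. norm (g x) powr p)"
    and "0 < \<epsilon> \<Longrightarrow> (\<lambda>k. loc_norm p g k powr (q * (1 + \<epsilon>))) summable_on X"
    and "bdd_above (gal_term X p q \<theta> g ` {0<..})"
  using assms set_borel_measurable_subset[OF _ Ik_sets Ik_subset_dom_X]
  by (auto simp: grand_amalgam_def loc_int_powr_eq_loc_norm_powr)

lemma gal_term_le_gal_norm:
  assumes "g \<in> grand_amalgam X p q \<theta>" "0 < \<epsilon>"
  shows "gal_term X p q \<theta> g \<epsilon> \<le> gal_norm X p q \<theta> g"
  unfolding gal_norm_def using assms grand_amalgamD(5)[OF assms(1)] by (intro cSUP_upper) auto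

lemma gal_norm_le:
  assumes "\<And>\<epsilon>. 0 < \<epsilon> \<Longrightarrow> gal_term X p q \<theta> g \<epsilon> \<le> B"
  shows "gal_norm X p q \<theta> g \<le> B"
  unfolding gal_norm_def using assms by (intro cSUP_least) auto

lemma gal_norm_nonneg:
  assumes "g \<in> grand_amalgam X p q \<theta>"
  shows "0 \<le> gal_norm X p q \<theta> g"
  using gal_term_nonneg gal_term_le_gal_norm[OF assms, of 1] by (rule order_trans) simp

lemma gal_term_mult:
  assumes "0 < p" "0 < q" "0 < \<epsilon>"
  shows "gal_term X p q \<theta> (\<lambda>x. c * g x) \<epsilon> = norm c * gal_term X p q \<theta> g \<epsilon>"
proof -
  define r where "r = q * (1 + \<epsilon>)"
  have "0 < r"
    using assms by (simp add: r_def)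
  have "(\<Sum>\<^sub>\<infinity>k\<in>X. loc_norm p (\<lambda>x. c * g x) k powr r) = norm c powr r * (\<Sum>\<^sub>\<infinity>k\<in>X. loc_norm p g k powr r)"
    using assms(1) by (simp add: loc_norm_mult powr_mult loc_norm_nonneg infsum_cmult_right')
  moreover have "(norm c powr r) powr (1 / r) = norm c"
    using \<open>0 < r\<close> by (simp add: powr_powr)
  ultimately show ?thesis
    unfolding gal_term_eq_loc_norm r_def[symmetric]
    by (simp add: powr_mult infsum_nonneg mult.left_commute)
qed

lemma grand_amalgam_loc_norm_add_le:
  assumes "1 \<le> p" "f \<in> grand_amalgam X p q \<theta>" "g \<in> grand_amalgam X p q \<theta>" "k \<in> X"
  shows "loc_norm p (\<lambda>x. f x + g x) k \<le> loc_norm p f k + loc_norm p g k"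
  using assms by (intro loc_norm_add_le grand_amalgamD) auto

lemma
  assumes p: "1 \<le> p" and q: "1 \<le> q" and "0 < \<epsilon>"
    and f: "f \<in> grand_amalgam X p q \<theta>" and g: "g \<in> grand_amalgam X p q \<theta>"
  shows summable_loc_norm_add: "(\<lambda>k. loc_norm p (\<lambda>x. f x + g x) k powr (q * (1 + \<epsilon>))) summable_on X"
    and gal_term_add_le: "gal_term X p q \<theta> (\<lambda>x. f x + g x) \<epsilon> \<le> gal_term X p q \<theta> f \<epsilon> + gal_term X p q \<theta> g \<epsilon>"
proof -
  have r: "1 \<le> q * (1 + \<epsilon>)"
    using q \<open>0 < \<epsilon>\<close> mult_mono[of 1 q 1 "1 + \<epsilon>"] by simp
  note Minkowski_hyps = r _ _ _ grand_amalgam_loc_norm_add_le[OF p f g]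
    grand_amalgamD(4)[OF f \<open>0 < \<epsilon>\<close>] grand_amalgamD(4)[OF g \<open>0 < \<epsilon>\<close>]
  show "(\<lambda>k. loc_norm p (\<lambda>x. f x + g x) k powr (q * (1 + \<epsilon>))) summable_on X"
    by (rule summable_on_powr_of_le_add[OF Minkowski_hyps]) (simp_all add: loc_norm_nonneg)
  have "(\<Sum>\<^sub>\<infinity>k\<in>X. loc_norm p (\<lambda>x. f x + g x) k powr (q * (1 + \<epsilon>))) powr (1 / (q * (1 + \<epsilon>)))
      \<le> (\<Sum>\<^sub>\<infinity>k\<in>X. loc_norm p f k powr (q * (1 + \<epsilon>))) powr (1 / (q * (1 + \<epsilon>)))
        + (\<Sum>\<^sub>\<infinity>k\<in>X. loc_norm p g k powr (q * (1 + \<epsilon>))) powr (1 / (q * (1 + \<epsilon>)))"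
    by (rule Minkowski_infsum[OF Minkowski_hyps]) (simp_all add: loc_norm_nonneg)
  then show "gal_term X p q \<theta> (\<lambda>x. f x + g x) \<epsilon> \<le> gal_term X p q \<theta> f \<epsilon> + gal_term X p q \<theta> g \<epsilon>"
    unfolding gal_term_eq_loc_norm distrib_left[symmetric] by (rule mult_left_mono) simp
qed

lemma zero_in_grand_amalgam: "(\<lambda>x. 0) \<in> grand_amalgam X p q \<theta>"
proof -
  have "loc_norm p (\<lambda>x. 0) k = 0" for k
    by (simp add: loc_norm_def loc_int_def)
  then show ?thesis
    by (intro grand_amalgamI[where B = 0]) (simp_all add: gal_term_eq_loc_norm set_borel_measurable_def)
qed

lemma grand_amalgam_add:
  assumes "1 \<le> p" "1 \<le> q" "f \<in> grand_amalgam X p q \<theta>" "g \<in> grand_amalgam X p q \<theta>"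
  shows "(\<lambda>x. f x + g x) \<in> grand_amalgam X p q \<theta>"
proof (rule grand_amalgamI)
  show "set_borel_measurable lebesgue (dom_X X) (\<lambda>x. f x + g x)"
    using grand_amalgamD(1)[OF assms(3)] grand_amalgamD(1)[OF assms(4)]
    by (simp add: set_borel_measurable_def scaleR_add_right)
  show "set_integrable lebesgue (Ik k) (\<lambda>x. norm (f x + g x) powr p)" if "k \<in> X" for k
    using assms that by (intro set_integrable_norm_add_powr Ik_sets grand_amalgamD) auto
  show "gal_term X p q \<theta> (\<lambda>x. f x + g x) \<epsilon> \<le> gal_norm X p q \<theta> f + gal_norm X p q \<theta> g"
    if "0 < \<epsilon>" for \<epsilon>
    using gal_term_add_le[OF assms(1,2) that assms(3,4)]
      gal_term_le_gal_norm[OF assms(3) that] gal_term_le_gal_norm[OF assms(4) that] by linarith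
qed (use summable_loc_norm_add assms in auto)

lemma grand_amalgam_mult:
  assumes "0 < p" "0 < q" "g \<in> grand_amalgam X p q \<theta>"
  shows "(\<lambda>x. c * g x) \<in> grand_amalgam X p q \<theta>"
proof (rule grand_amalgamI)
  show "set_borel_measurable lebesgue (dom_X X) (\<lambda>x. c * g x)"
  proof -
    have "(\<lambda>x. indicator (dom_X X) x *\<^sub>R g x) \<in> borel_measurable lebesgue"
      using grand_amalgamD(1)[OF assms(3)] by (simp add: set_borel_measurable_def)
    then have "(\<lambda>x. c * (indicator (dom_X X) x *\<^sub>R g x)) \<in> borel_measurable lebesgue"
      by measurable
    then show ?thesis
      by (simp add: set_borel_measurable_def mult.left_commute)
  qed
  show "set_integrable lebesgue (Ik k) (\<lambda>x. norm (c * g x) powr p)" if "k \<in> X" for k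
    using grand_amalgamD(3)[OF assms(3) that] by (simp add: norm_mult powr_mult)
  show "(\<lambda>k. loc_norm p (\<lambda>x. c * g x) k powr (q * (1 + \<epsilon>))) summable_on X" if "0 < \<epsilon>" for \<epsilon>
    using grand_amalgamD(4)[OF assms(3) that]
    by (simp add: loc_norm_mult[OF assms(1)] powr_mult loc_norm_nonneg summable_on_cmult_right)
  show "gal_term X p q \<theta> (\<lambda>x. c * g x) \<epsilon> \<le> norm c * gal_norm X p q \<theta> g" if "0 < \<epsilon>" for \<epsilon>
    using gal_term_le_gal_norm[OF assms(3) that]
    by (simp add: gal_term_mult[OF assms(1,2) that] mult_left_mono)
qed

lemma gal_norm_mult:
  assumes "0 < p" "0 < q" "g \<in> grand_amalgam X p q \<theta>"
  shows "gal_norm X p q \<theta> (\<lambda>x. c * g x) = norm c * gal_norm X p q \<theta> g"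
proof -
  have le: "gal_norm X p q \<theta> (\<lambda>x. a * h x) \<le> norm a * gal_norm X p q \<theta> h"
    if "h \<in> grand_amalgam X p q \<theta>" for a h
    using gal_term_le_gal_norm[OF that]
    by (intro gal_norm_le) (simp add: gal_term_mult[OF assms(1,2)] mult_left_mono)
  show ?thesis
  proof (cases "c = 0")
    case True
    then show ?thesis
      using le[OF assms(3), of 0] gal_norm_nonneg[OF grand_amalgam_mult[OF assms, where c = 0]] by simp
  next
    case False
    have "gal_norm X p q \<theta> g = gal_norm X p q \<theta> (\<lambda>x. inverse c * (c * g x))"
      using False by (simp add: field_simps)
    also have "\<dots> \<le> norm (inverse c) * gal_norm X p q \<theta> (\<lambda>x. c * g x)"
      by (rule le[OF grand_amalgam_mult[OF assms]])
    finally have "norm c * gal_norm X p q \<theta> g \<le> gal_norm X p q \<theta> (\<lambda>x. c * g x)"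
      using False by (simp add: norm_divide divide_simps mult.commute)
    then show ?thesis
      using le[OF assms(3), of c] by linarith
  qed
qed

lemma gal_norm_triangle:
  assumes "1 \<le> p" "1 \<le> q" "f \<in> grand_amalgam X p q \<theta>" "g \<in> grand_amalgam X p q \<theta>"
  shows "gal_norm X p q \<theta> (\<lambda>x. f x + g x) \<le> gal_norm X p q \<theta> f + gal_norm X p q \<theta> g"
proof (rule gal_norm_le)
  fix \<epsilon> :: real
  assume "0 < \<epsilon>"
  show "gal_term X p q \<theta> (\<lambda>x. f x + g x) \<epsilon> \<le> gal_norm X p q \<theta> f + gal_norm X p q \<theta> g"
    using gal_term_add_le[OF assms(1,2) \<open>0 < \<epsilon>\<close> assms(3,4)]
      gal_term_le_gal_norm[OF assms(3) \<open>0 < \<epsilon>\<close>] gal_term_le_gal_norm[OF assms(4) \<open>0 < \<epsilon>\<close>]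
    by linarith
qed

lemma gal_norm_eq_0_iff:
  assumes g: "g \<in> grand_amalgam X p q \<theta>"
  shows "gal_norm X p q \<theta> g = 0 \<longleftrightarrow> (AE x in lebesgue. x \<in> dom_X X \<longrightarrow> g x = 0)"
proof
  assume "gal_norm X p q \<theta> g = 0"
  then have "gal_term X p q \<theta> g 1 = 0"
    using gal_term_le_gal_norm[OF g, of 1] gal_term_nonneg[of X p q \<theta> g 1] by simp
  then have "(\<Sum>\<^sub>\<infinity>k\<in>X. loc_norm p g k powr (q * 2)) = 0"
    by (simp add: gal_term_eq_loc_norm)
  then have "loc_norm p g k = 0" if "k \<in> X" for k
    using nonneg_infsum_le_0D[OF _ grand_amalgamD(4)[OF g, of 1], of k] that by simp
  then have "\<forall>k\<in>X. AE x in lebesgue. x \<in> Ik k \<longrightarrow> g x = 0"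
    using loc_norm_eq_0_iff[OF grand_amalgamD(3)[OF g]] by blast
  then have "AE x in lebesgue. \<forall>k\<in>X. x \<in> Ik k \<longrightarrow> g x = 0"
    by (subst AE_ball_countable) auto
  then show "AE x in lebesgue. x \<in> dom_X X \<longrightarrow> g x = 0"
    by eventually_elim (auto simp: dom_X_def)
next
  assume zero: "AE x in lebesgue. x \<in> dom_X X \<longrightarrow> g x = 0"
  have "loc_norm p g k = 0" if "k \<in> X" for k
    using zero Ik_subset_dom_X[OF that]
    by (subst loc_norm_eq_0_iff[OF grand_amalgamD(3)[OF g that]]) (auto elim: AE_mp)
  then have "gal_term X p q \<theta> g \<epsilon> = 0" for \<epsilon>
    by (simp add: gal_term_eq_loc_norm infsum_0)
  then have "gal_norm X p q \<theta> g \<le> 0"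
    by (intro gal_norm_le) simp
  then show "gal_norm X p q \<theta> g = 0"
    using gal_norm_nonneg[OF g] by simp
qed

theorem theorem2p1:
  fixes X :: "int set" and p q \<theta> :: real
  assumes "admissible_index_set X"
    and "1 \<le> p" and "1 \<le> q" and "\<theta> > 0"
  shows "(\<lambda>x. 0) \<in> grand_amalgam X p q \<theta>
    \<and> (\<forall>f\<in>grand_amalgam X p q \<theta>. \<forall>g\<in>grand_amalgam X p q \<theta>.
         (\<lambda>x. f x + g x) \<in> grand_amalgam X p q \<theta>)
    \<and> (\<forall>f\<in>grand_amalgam X p q \<theta>. \<forall>c::complex. (\<lambda>x. c * f x) \<in> grand_amalgam X p q \<theta>)
    \<and> (\<forall>f\<in>grand_amalgam X p q \<theta>. 0 \<le> gal_norm X p q \<theta> f)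
    \<and> (\<forall>f\<in>grand_amalgam X p q \<theta>.
         gal_norm X p q \<theta> f = 0 \<longleftrightarrow> (AE x in lebesgue. x \<in> dom_X X \<longrightarrow> f x = 0))
    \<and> (\<forall>f\<in>grand_amalgam X p q \<theta>. \<forall>c::complex.
         gal_norm X p q \<theta> (\<lambda>x. c * f x) = norm c * gal_norm X p q \<theta> f)
    \<and> (\<forall>f\<in>grand_amalgam X p q \<theta>. \<forall>g\<in>grand_amalgam X p q \<theta>.
         gal_norm X p q \<theta> (\<lambda>x. f x + g x) \<le> gal_norm X p q \<theta> f + gal_norm X p q \<theta> g)"
proof -
  \<comment> \<open>Neither the admissibility of \<open>X\<close> nor \<open>\<theta> > 0\<close> is needed: the index set only has to be
    countable, which every set of integers is.\<close>
  have "0 < p" "0 < q"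
    using assms by auto
  with assms(2,3) show ?thesis
    by (intro conjI ballI allI zero_in_grand_amalgam grand_amalgam_add grand_amalgam_mult
        gal_norm_nonneg gal_norm_eq_0_iff gal_norm_mult gal_norm_triangle)
qed

end
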